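(* Let $p$ be a prime and let $G$ be a finite group of order divisible by $p$. Let $P$ be a Sylow $p$-subgroup of $G$ and let $a$ be a non-negative integer such that $a \le \log_p(\exp(\mathbf{Z}(P)))$. Then $k_G(p^a) \ge p^{a-1}$.
   Context: For a finite group $G$, a prime $p$ and a non-negative integer $a$, $k_G(p^a)$ denotes the number of conjugacy classes of $G$ consisting of elements $g$ with $|g|_p = p^a$, where $|g|_p$ is the $p$-part of the order of $g$. $\mathbf{Z}(P)$ is the center of $P$ and $\exp$ denotes the exponent of a group. *)

theory Defs
  imports "HOL-Algebra.Algebra" "HOL-Computational_Algebra.Primes" Complex_Main
begin

definition is_sylow :: "('a, 'b) monoid_scheme \<Rightarrow> nat \<Rightarrow> 'a set \<Rightarrow> bool" where
  "is_sylow G p P \<longleftrightarrow> subgroup P G \<and> card P = p ^ multiplicity p (order G)"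

definition subgroup_center :: "('a, 'b) monoid_scheme \<Rightarrow> 'a set \<Rightarrow> 'a set" where
  "subgroup_center G P = {z \<in> P. \<forall>g \<in> P. z \<otimes>\<^bsub>G\<^esub> g = g \<otimes>\<^bsub>G\<^esub> z}"

definition set_exponent :: "('a, 'b) monoid_scheme \<Rightarrow> 'a set \<Rightarrow> nat" where
  "set_exponent G H = Lcm (group.ord G ` H)"

definition p_part :: "nat \<Rightarrow> nat \<Rightarrow> nat" where
  "p_part p n = p ^ multiplicity p n"

definition conj_class :: "('a, 'b) monoid_scheme \<Rightarrow> 'a \<Rightarrow> 'a set" where
  "conj_class G g = {inv\<^bsub>G\<^esub> h \<otimes>\<^bsub>G\<^esub> g \<otimes>\<^bsub>G\<^esub> h | h. h \<in> carrier G}"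

definition kG :: "('a, 'b) monoid_scheme \<Rightarrow> nat \<Rightarrow> nat \<Rightarrow> nat" where
  "kG G p a = card {conj_class G g | g. g \<in> carrier G \<and> p_part p (group.ord G g) = p ^ a}"

end

theory Submission
  imports Defs "HOL-Number_Theory.Number_Theory"
begin

(* Pick z in Z(P) of order p^a: it exists because Z(P) is a p-group of exponent at least p^a.
   Let S be the set of generators of the cyclic group <z>, so |S| = phi(p^a) is a multiple of
   p^(a-1). Conjugating an element of S by g lands in S exactly when g normalizes <z>, and all
   elements of S have the centralizer C = C_G(z); hence every conjugacy class meeting S meets it
   in |N_G(<z>)| / |C| elements. This number is prime to p because the Sylow subgroup P lies in C,
   so p^(a-1) divides the number of classes meeting S, all of which consist of elements of
   order p^a. *)

lemma card_eq_card_image_mult: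
  assumes "finite A" and "\<And>y. y \<in> f ` A \<Longrightarrow> card {a \<in> A. f a = y} = k"
  shows "card A = card (f ` A) * k"
proof -
  have "A = (\<Union>y\<in>f ` A. {a \<in> A. f a = y})" by auto
  also have "card \<dots> = (\<Sum>y\<in>f ` A. card {a \<in> A. f a = y})"
    using assms(1) by (intro card_UN_disjoint) auto
  also have "\<dots> = card (f ` A) * k"
    using assms(2) by simp
  finally show ?thesis .
qed

lemma prime_not_dvd_cofactor:
  fixes p n k c :: nat
  assumes "Factorial_Ring.prime p" "n \<noteq> 0" "k * c dvd n" "p ^ multiplicity p n dvd c"
  shows "\<not> p dvd k"
proof
  assume "p dvd k"
  with assms(3,4) have "p ^ Suc (multiplicity p n) dvd n"
    by (metis dvd_trans mult_dvd_mono power_Suc)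
  moreover have "\<not> is_unit p"
    using assms(1) not_prime_unit by blast
  ultimately have "Suc (multiplicity p n) \<le> multiplicity p n"
    using assms(2) power_dvd_iff_le_multiplicity by blast
  then show False by simp
qed

lemma prime_power_dvd_member_of_le_Lcm:
  fixes A :: "nat set"
  assumes "Factorial_Ring.prime p" "A \<noteq> {}" "\<forall>n\<in>A. \<exists>i. n = p ^ i" "p ^ a \<le> Lcm A"
  shows "\<exists>n\<in>A. p ^ a dvd n"
proof (rule ccontr)
  assume none: "\<not> (\<exists>n\<in>A. p ^ a dvd n)"
  have "a \<noteq> 0"
  proof
    assume "a = 0"
    with assms(2) none show False by (metis ex_in_conv one_dvd power_0)
  qed
  have "n dvd p ^ (a - 1)" if "n \<in> A" for n
  proof -
    from assms(3) that have "\<exists>i. n = p ^ i" ..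
    then obtain i where i: "n = p ^ i" ..
    with none that have "\<not> a \<le> i" by (metis le_imp_power_dvd)
    then show ?thesis using i by (simp add: le_imp_power_dvd)
  qed
  then have "Lcm A dvd p ^ (a - 1)"
    by (rule Lcm_least)
  then have "Lcm A \<le> p ^ (a - 1)"
    using assms(1) by (simp add: dvd_imp_le prime_gt_0_nat)
  moreover have "p ^ (a - 1) < p ^ a"
    using \<open>a \<noteq> 0\<close> prime_gt_1_nat[OF assms(1)] by simp
  ultimately show False using assms(4) by linarith
qed

lemma pow_le_of_le_log:
  fixes b n a :: nat
  assumes "1 < b" "0 < n" "real a \<le> log (real b) (real n)"
  shows "b ^ a \<le> n"
proof -
  have "real b powr real a \<le> real n"
    using assms le_log_iff by simp
  then show ?thesis
    using assms(1) by (simp add: powr_realpow flip: of_nat_power)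
qed

lemma powr_pred_le_of_pow_pred_le:
  fixes b a k :: nat
  assumes "1 < b" "b ^ (a - 1) \<le> k"
  shows "real b powr (real a - 1) \<le> real k"
proof (cases "a = 0")
  case True
  then have "real b powr (real a - 1) = inverse (real b)"
    using assms(1) by (simp add: powr_minus)
  also have "\<dots> \<le> 1" using assms(1) by (simp add: inverse_le_1_iff)
  also have "1 \<le> real k" using assms(2) True by simp
  finally show ?thesis .
next
  case False
  then have "real b powr (real a - 1) = real b powr real (a - 1)"
    by simp
  also have "\<dots> = real (b ^ (a - 1))"
    using assms(1) by (simp add: powr_realpow)
  also have "\<dots> \<le> real k" using assms(2) by simp
  finally show ?thesis .
qed

context group
begin

lemma card_subgroup_dvd:
  assumes "subgroup H G" "subgroup K G" "H \<subseteq> K"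
  shows "card H dvd card K"
proof -
  interpret K: group "G\<lparr>carrier := K\<rparr>"
    using subgroup_imp_group[OF assms(2)] .
  have "card (rcosets\<^bsub>G\<lparr>carrier := K\<rparr>\<^esub> H) * card H = card K"
    using K.lagrange[OF subgroup_incl[OF assms]] by (simp add: order_def)
  then show ?thesis by (metis dvd_triv_right)
qed

lemma ord_dvd_card_subgroup:
  assumes "subgroup H G" "x \<in> H"
  shows "ord x dvd card H"
proof -
  have x: "x \<in> carrier G"
    using subgroup.mem_carrier[OF assms] .
  have "generate G {x} \<subseteq> H"
    using assms by (intro generate_subgroup_incl) simp_all
  then have "card (generate G {x}) dvd card H"
    using x by (intro card_subgroup_dvd generate_is_subgroup assms(1)) simp_all
  then show ?thesis
    using generate_pow_card[OF x] by simp
qed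

(* The library's conjugation action and normalizer conjugate by g x inv g, whereas conj_class
   is defined through inv h x h. *)
lemma conj_class_altdef: "conj_class G x = {g \<otimes> x \<otimes> inv g | g. g \<in> carrier G}"
proof (intro equalityI subsetI)
  fix y assume "y \<in> conj_class G x"
  then obtain h where "h \<in> carrier G" "y = inv h \<otimes> x \<otimes> h"
    by (auto simp: conj_class_def)
  then show "y \<in> {g \<otimes> x \<otimes> inv g | g. g \<in> carrier G}"
    by (intro CollectI exI[of _ "inv h"]) simp
next
  fix y assume "y \<in> {g \<otimes> x \<otimes> inv g | g. g \<in> carrier G}"
  then obtain g where "g \<in> carrier G" "y = g \<otimes> x \<otimes> inv g"
    by blast
  then show "y \<in> conj_class G x"
    unfolding conj_class_def by (intro CollectI exI[of _ "inv g"]) simp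
qed

lemma conj_mult:
  assumes "g \<in> carrier G" "h \<in> carrier G" "x \<in> carrier G"
  shows "(g \<otimes> h) \<otimes> x \<otimes> inv (g \<otimes> h) = g \<otimes> (h \<otimes> x \<otimes> inv h) \<otimes> inv g"
  using assms by (simp add: inv_mult_group m_assoc)

lemma conj_class_eq_iff:
  assumes "x \<in> carrier G" "y \<in> carrier G"
  shows "conj_class G y = conj_class G x \<longleftrightarrow> y \<in> conj_class G x"
proof
  assume "conj_class G y = conj_class G x"
  moreover have "y \<in> conj_class G y"
    unfolding conj_class_altdef using assms(2) by (intro CollectI exI[of _ \<one>]) simp
  ultimately show "y \<in> conj_class G x" by simp
next
  have conj_class_subset: "conj_class G (g \<otimes> a \<otimes> inv g) \<subseteq> conj_class G a"
    if "a \<in> carrier G" "g \<in> carrier G" for a g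
    unfolding conj_class_altdef using that conj_mult[of _ g a] by auto (metis m_closed)
  assume "y \<in> conj_class G x"
  then obtain g where g: "g \<in> carrier G" "y = g \<otimes> x \<otimes> inv g"
    by (auto simp: conj_class_altdef)
  moreover have "x = inv g \<otimes> y \<otimes> inv (inv g)"
    using conj_mult[of "inv g" g x] g assms by simp
  ultimately show "conj_class G y = conj_class G x"
    using conj_class_subset assms by (metis equalityI inv_closed)
qed

definition centralizer :: "'a \<Rightarrow> 'a set"
  where "centralizer x = {g \<in> carrier G. g \<otimes> x = x \<otimes> g}"

lemma subgroup_centralizer:
  assumes "x \<in> carrier G"
  shows "subgroup (centralizer x) G"
proof (rule subgroupI)
  show "centralizer x \<subseteq> carrier G" by (auto simp: centralizer_def)
  show "centralizer x \<noteq> {}" using assms by (auto simp: centralizer_def)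
next
  fix g assume "g \<in> centralizer x"
  then have g: "g \<in> carrier G" "g \<otimes> x = x \<otimes> g" by (auto simp: centralizer_def)
  have "g \<otimes> (x \<otimes> inv g) = x \<otimes> g \<otimes> inv g"
    using g assms by (simp flip: g(2) add: m_assoc)
  also have "\<dots> = x"
    using g assms by (simp add: m_assoc)
  finally have "inv g \<otimes> x = x \<otimes> inv g"
    using g assms by (simp add: inv_solve_left')
  then show "inv g \<in> centralizer x" using g by (simp add: centralizer_def)
next
  fix g h assume "g \<in> centralizer x" "h \<in> centralizer x"
  then show "g \<otimes> h \<in> centralizer x"
    using assms by (auto simp: centralizer_def) (metis m_assoc)
qed

lemma centralizer_generate_subset:
  assumes "x \<in> carrier G" "y \<in> generate G {x}"
  shows "centralizer x \<subseteq> centralizer y"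
proof
  fix g assume g: "g \<in> centralizer x"
  then have "generate G {x} \<subseteq> centralizer g"
    using assms(1) by (intro generate_subgroup_incl subgroup_centralizer) (auto simp: centralizer_def)
  then show "g \<in> centralizer y"
    using assms(2) g by (auto simp: centralizer_def)
qed

lemma mem_subgroup_center_iff:
  assumes "P \<subseteq> carrier G"
  shows "z \<in> subgroup_center G P \<longleftrightarrow> z \<in> P \<and> P \<subseteq> centralizer z"
  using assms by (auto simp: subgroup_center_def centralizer_def)

lemma conj_eq_conj_iff:
  assumes "g \<in> carrier G" "h \<in> carrier G" "x \<in> carrier G"
  shows "g \<otimes> x \<otimes> inv g = h \<otimes> x \<otimes> inv h \<longleftrightarrow> inv h \<otimes> g \<in> centralizer x"
proof -
  define c where "c = inv h \<otimes> g"
  have c: "c \<in> carrier G" "g = h \<otimes> c"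
    using assms by (simp_all add: c_def flip: m_assoc)
  then have "g \<otimes> x \<otimes> inv g = h \<otimes> (c \<otimes> x \<otimes> inv c) \<otimes> inv h"
    using assms by (simp add: conj_mult)
  then have "g \<otimes> x \<otimes> inv g = h \<otimes> x \<otimes> inv h \<longleftrightarrow> c \<otimes> x \<otimes> inv c = x"
    using assms c by (auto dest: conjugation_is_inj)
  also have "\<dots> \<longleftrightarrow> c \<in> centralizer x"
    using assms c by (auto simp: centralizer_def inv_solve_right')
  finally show ?thesis by (simp add: c_def)
qed

lemma card_conj_preimage:
  assumes "finite (carrier G)" "x \<in> carrier G"
  shows "card {g \<in> carrier G. g \<otimes> x \<otimes> inv g \<in> T}
    = card (conj_class G x \<inter> T) * card (centralizer x)"
proof -
  let ?A = "{g \<in> carrier G. g \<otimes> x \<otimes> inv g \<in> T}" and ?f = "\<lambda>g. g \<otimes> x \<otimes> inv g"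
  have "?f ` ?A = conj_class G x \<inter> T" by (auto simp: conj_class_altdef)
  moreover have "card {g \<in> ?A. ?f g = y} = card (centralizer x)" if "y \<in> ?f ` ?A" for y
  proof -
    obtain h where h: "h \<in> ?A" "y = ?f h" using \<open>y \<in> ?f ` ?A\<close> by blast
    have "{g \<in> ?A. ?f g = y} = (\<lambda>c. h \<otimes> c) ` centralizer x"
    proof (intro equalityI subsetI)
      fix g assume "g \<in> {g \<in> ?A. ?f g = y}"
      then have "g \<in> carrier G" "inv h \<otimes> g \<in> centralizer x"
        using h assms(2) conj_eq_conj_iff by auto
      moreover have "g = h \<otimes> (inv h \<otimes> g)"
        using h \<open>g \<in> carrier G\<close> by (simp flip: m_assoc)
      ultimately show "g \<in> (\<lambda>c. h \<otimes> c) ` centralizer x" by blast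
    next
      fix g assume "g \<in> (\<lambda>c. h \<otimes> c) ` centralizer x"
      then obtain c where c: "c \<in> centralizer x" "g = h \<otimes> c" by blast
      then have "c \<in> carrier G" by (simp add: centralizer_def)
      then have "?f g = y"
        using c h assms(2) conj_eq_conj_iff[of g h x] by (simp flip: m_assoc)
      then show "g \<in> {g \<in> ?A. ?f g = y}"
        using c h \<open>c \<in> carrier G\<close> by auto
    qed
    moreover have "inj_on (\<lambda>c. h \<otimes> c) (centralizer x)"
      using h by (intro inj_onI) (auto simp: centralizer_def)
    ultimately show ?thesis by (simp add: card_image)
  qed
  ultimately show ?thesis
    using card_eq_card_image_mult[of ?A ?f] assms(1) by simp
qed

lemma card_eq_card_conj_classes_mult:
  assumes "finite S" "S \<subseteq> carrier G" "\<And>x. x \<in> S \<Longrightarrow> card (conj_class G x \<inter> S) = k"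
  shows "card S = card (conj_class G ` S) * k"
proof (rule card_eq_card_image_mult[OF assms(1)])
  fix c assume "c \<in> conj_class G ` S"
  then obtain x where x: "x \<in> S" "c = conj_class G x" by blast
  then have "{y \<in> S. conj_class G y = c} = conj_class G x \<inter> S"
    using assms(2) conj_class_eq_iff by blast
  then show "card {y \<in> S. conj_class G y = c} = k"
    using assms(3) x(1) by simp
qed

lemma conjugation_in_hom:
  assumes "g \<in> carrier G"
  shows "(\<lambda>x. g \<otimes> x \<otimes> inv g) \<in> hom G G"
proof (rule homI)
  fix x y assume "x \<in> carrier G" "y \<in> carrier G"
  then show "g \<otimes> (x \<otimes> y) \<otimes> inv g = g \<otimes> x \<otimes> inv g \<otimes> (g \<otimes> y \<otimes> inv g)"
    using assms by (simp add: m_assoc inv_solve_left)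
qed (use assms in simp)

lemma generate_conj:
  assumes "g \<in> carrier G" "x \<in> carrier G"
  shows "generate G {g \<otimes> x \<otimes> inv g} = (\<lambda>y. g \<otimes> y \<otimes> inv g) ` generate G {x}"
proof -
  interpret conj: group_hom G G "\<lambda>y. g \<otimes> y \<otimes> inv g"
    using conjugation_in_hom[OF assms(1)] by (simp add: group_hom_def group_hom_axioms_def)
  show ?thesis
    using conj.generate_img[of "{x}"] assms(2) by simp
qed

lemma generate_singleton_eq_image:
  assumes "finite (carrier G)" "z \<in> carrier G"
  shows "generate G {z} = (\<lambda>k. z [^] k) ` {1..ord z}"
proof -
  have "(\<lambda>k. z [^] k) ` {1..ord z} \<subseteq> generate G {z}"
    using generate_pow_on_finite_carrier[OF assms] by auto
  moreover have "card ((\<lambda>k. z [^] k) ` {1..ord z}) = card (generate G {z})"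
    using card_image[OF ord_inj'[OF assms(2)]] generate_pow_card[OF assms(2)] by simp
  moreover have "finite (generate G {z})"
    using assms finite_subset[OF generate_incl] by blast
  ultimately show ?thesis by (metis card_subset_eq)
qed

definition cyclic_generators :: "'a \<Rightarrow> 'a set"
  where "cyclic_generators z = {x \<in> carrier G. generate G {x} = generate G {z}}"

lemma mem_cyclic_generators_iff:
  assumes "finite (carrier G)" "z \<in> carrier G"
  shows "x \<in> cyclic_generators z \<longleftrightarrow> x \<in> generate G {z} \<and> ord x = ord z"
proof
  assume "x \<in> cyclic_generators z"
  then have "x \<in> carrier G" "generate G {x} = generate G {z}"
    by (auto simp: cyclic_generators_def)
  then show "x \<in> generate G {z} \<and> ord x = ord z"
    using assms(2) generate.incl[of x "{x}" G] by (simp add: generate_pow_card)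
next
  assume x: "x \<in> generate G {z} \<and> ord x = ord z"
  then have "x \<in> carrier G"
    using assms(2) generate_in_carrier[of "{z}"] by blast
  have "generate G {x} \<subseteq> generate G {z}"
    using x assms(2) by (intro generate_subgroup_incl generate_is_subgroup) auto
  moreover have "card (generate G {x}) = card (generate G {z})"
    using x assms(2) \<open>x \<in> carrier G\<close> by (simp flip: generate_pow_card)
  moreover have "finite (generate G {z})"
    using assms finite_subset[OF generate_incl] by blast
  ultimately show "x \<in> cyclic_generators z"
    using \<open>x \<in> carrier G\<close> by (simp add: cyclic_generators_def card_subset_eq)
qed

lemma card_cyclic_generators:
  assumes "finite (carrier G)" "z \<in> carrier G"
  shows "card (cyclic_generators z) = totient (ord z)"
proof -
  have "cyclic_generators z = (\<lambda>k. z [^] k) ` totatives (ord z)"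
    using assms by (auto simp: mem_cyclic_generators_iff generate_singleton_eq_image
        pow_ord_eq_ord_iff totatives_def)
  moreover have "inj_on (\<lambda>k. z [^] k) (totatives (ord z))"
    by (rule inj_on_subset[OF ord_inj'[OF assms(2)]]) (auto simp: totatives_def)
  ultimately show ?thesis by (simp add: card_image totient_def)
qed

lemma mem_normalizer_iff:
  assumes "H \<subseteq> carrier G"
  shows "g \<in> normalizer G H \<longleftrightarrow> g \<in> carrier G \<and> (\<lambda>y. g \<otimes> y \<otimes> inv g) ` H = H"
proof -
  have "r_coset G (l_coset G g H) (inv g) = (\<lambda>y. g \<otimes> y \<otimes> inv g) ` H"
    by (auto simp: l_coset_def r_coset_def)
  then show ?thesis
    using assms by (simp add: normalizer_def stabilizer_def)
qed

lemma conj_mem_cyclic_generators_iff: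
  assumes "x \<in> cyclic_generators z" "g \<in> carrier G"
  shows "g \<otimes> x \<otimes> inv g \<in> cyclic_generators z \<longleftrightarrow> g \<in> normalizer G (generate G {z})"
proof -
  have x: "x \<in> carrier G" and gen: "generate G {x} = generate G {z}"
    using assms(1) by (auto simp: cyclic_generators_def)
  have "generate G {z} \<subseteq> carrier G"
    using x by (simp flip: gen add: generate_incl)
  moreover have "generate G {g \<otimes> x \<otimes> inv g} = (\<lambda>y. g \<otimes> y \<otimes> inv g) ` generate G {z}"
    using generate_conj[OF assms(2) x] gen by simp
  ultimately show ?thesis
    using assms(2) x by (simp add: cyclic_generators_def mem_normalizer_iff)
qed

lemma centralizer_cyclic_generator:
  assumes "x \<in> cyclic_generators z" "z \<in> carrier G"
  shows "centralizer x = centralizer z"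
proof -
  have "x \<in> carrier G" "generate G {x} = generate G {z}"
    using assms(1) by (auto simp: cyclic_generators_def)
  then show ?thesis
    using assms(2) centralizer_generate_subset generate.incl[of _ "{_}" G]
    by (metis equalityI singletonI)
qed

lemma card_conj_class_inter_cyclic_generators:
  assumes "finite (carrier G)" "z \<in> carrier G" "x \<in> cyclic_generators z"
  shows "card (conj_class G x \<inter> cyclic_generators z) * card (centralizer z)
    = card (normalizer G (generate G {z}))"
proof -
  have x: "x \<in> carrier G" using assms(3) by (simp add: cyclic_generators_def)
  have "{g \<in> carrier G. g \<otimes> x \<otimes> inv g \<in> cyclic_generators z} = normalizer G (generate G {z})"
    using conj_mem_cyclic_generators_iff[OF assms(3)] mem_normalizer_iff[OF generate_incl] assms(2)
    by auto
  then show ?thesis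
    using card_conj_preimage[OF assms(1) x, of "cyclic_generators z"]
      centralizer_cyclic_generator[OF assms(3,2)] by simp
qed

lemma prime_power_dvd_card_conj_classes_cyclic_generators:
  assumes fin: "finite (carrier G)" and p: "Factorial_Ring.prime p"
    and z: "z \<in> carrier G" "ord z = p ^ a"
    and P: "subgroup P G" "card P = p ^ multiplicity p (order G)" "P \<subseteq> centralizer z"
  shows "p ^ (a - 1) dvd card (conj_class G ` cyclic_generators z)"
proof -
  define S where "S = cyclic_generators z"
  define N where "N = normalizer G (generate G {z})"
  define K where "K = card (conj_class G z \<inter> S)"
  have S: "S \<subseteq> carrier G" "finite S" "z \<in> S"
    using fin z finite_subset by (auto simp: S_def cyclic_generators_def)
  have C: "subgroup (centralizer z) G" "0 < card (centralizer z)"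
    using subgroup_centralizer[OF z(1)] subgroup.finite_imp_card_positive fin by blast+
  have KC: "K * card (centralizer z) = card N"
    using card_conj_class_inter_cyclic_generators[OF fin z(1)] S(3) by (simp add: K_def S_def N_def)
  have cardS: "card S = card (conj_class G ` S) * K"
  proof (rule card_eq_card_conj_classes_mult[OF S(2,1)])
    fix x assume "x \<in> S"
    then have "card (conj_class G x \<inter> S) * card (centralizer z) = K * card (centralizer z)"
      using card_conj_class_inter_cyclic_generators[OF fin z(1)] KC by (simp add: S_def N_def)
    then show "card (conj_class G x \<inter> S) = K" using C(2) by simp
  qed
  have "\<not> p dvd K"
  proof (rule prime_not_dvd_cofactor[OF p])
    show "order G \<noteq> 0"
      using fin order_gt_0_iff_finite by blast
    have "subgroup N G"
      unfolding N_def using z(1) by (intro normalizer_imp_subgroup generate_incl) simp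
    then show "K * card (centralizer z) dvd order G"
      using KC card_subgroup_dvd[OF _ subgroup_self subgroup.subset] by (simp add: order_def)
    show "p ^ multiplicity p (order G) dvd card (centralizer z)"
      using card_subgroup_dvd[OF P(1) C(1) P(3)] P(2) by simp
  qed
  then have "coprime (p ^ (a - 1)) K"
    using p by (simp add: prime_imp_coprime)
  moreover have "p ^ (a - 1) dvd card S"
    using card_cyclic_generators[OF fin z(1)] z(2) p totient_prime_power
    by (cases "a = 0") (simp_all add: S_def)
  ultimately show ?thesis
    using cardS by (simp add: S_def coprime_dvd_mult_left_iff)
qed

lemma set_exponent_pos:
  assumes "finite (carrier G)" "H \<subseteq> carrier G"
  shows "0 < set_exponent G H"
proof -
  have "finite (ord ` H)"
    using finite_subset[OF assms(2,1)] by simp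
  moreover have "0 \<notin> ord ` H"
    using ord_ge_1[OF assms(1)] assms(2) by (metis imageE not_one_le_zero subsetD)
  ultimately show ?thesis
    unfolding set_exponent_def by (metis Lcm_0_iff_nat gr0I)
qed

lemma exists_elem_of_ord_in_subgroup_center:
  assumes fin: "finite (carrier G)" and p: "Factorial_Ring.prime p"
    and P: "subgroup P G" "card P = p ^ v"
    and a: "p ^ a \<le> set_exponent G (subgroup_center G P)"
  obtains z where "z \<in> subgroup_center G P" "ord z = p ^ a"
proof -
  let ?Z = "subgroup_center G P"
  have Z: "?Z \<subseteq> P" "\<one> \<in> ?Z"
    using P(1) subgroup.subset[OF P(1)] by (auto simp: subgroup_center_def subgroup.one_closed)
  have ord_prime_power: "\<exists>i. ord w = p ^ i" if "w \<in> ?Z" for w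
  proof -
    have "ord w dvd p ^ v"
      using ord_dvd_card_subgroup[OF P(1)] that Z(1) P(2) by auto
    then show ?thesis
      by (metis divides_primepow_nat[OF p])
  qed
  have "ord ` ?Z \<noteq> {}"
    using Z(2) by blast
  moreover have "\<forall>n\<in>ord ` ?Z. \<exists>i. n = p ^ i"
    using ord_prime_power by blast
  ultimately have "\<exists>n\<in>ord ` ?Z. p ^ a dvd n"
    using a unfolding set_exponent_def by (rule prime_power_dvd_member_of_le_Lcm[OF p])
  then obtain w where w: "w \<in> ?Z" "p ^ a dvd ord w"
    by blast
  from w(2) obtain m where m: "ord w = p ^ a * m" ..
  have wc: "w \<in> carrier G"
    using subgroup.subset[OF P(1)] Z(1) w(1) by blast
  have "m \<noteq> 0"
    using ord_ge_1[OF fin wc] m by (metis mult_0_right not_one_le_zero)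
  then have "ord (w [^] m) = p ^ a"
    using ord_pow[OF wc] m by simp
  moreover have "w [^] m \<in> ?Z"
  proof -
    have "w [^] m \<in> generate G {w}"
      using generate_pow_on_finite_carrier[OF fin wc] by blast
    then have "w [^] m \<in> P" "centralizer w \<subseteq> centralizer (w [^] m)"
      using centralizer_generate_subset[OF wc] generate_subgroup_incl[of "{w}" P] P(1) w(1) Z(1)
      by auto
    then show ?thesis
      using w(1) P(1) by (auto simp: mem_subgroup_center_iff subgroup.subset)
  qed
  ultimately show ?thesis using that by blast
qed

lemma card_conj_classes_cyclic_generators_le_kG:
  assumes "finite (carrier G)" "Factorial_Ring.prime p" "z \<in> carrier G" "ord z = p ^ a"
  shows "card (conj_class G ` cyclic_generators z) \<le> kG G p a"
  unfolding kG_def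
proof (rule card_mono)
  show "finite {conj_class G g | g. g \<in> carrier G \<and> p_part p (ord g) = p ^ a}"
    using assms(1) by (simp add: Setcompr_eq_image)
  have "x \<in> carrier G \<and> p_part p (ord x) = p ^ a" if "x \<in> cyclic_generators z" for x
  proof
    show "x \<in> carrier G"
      using that by (simp add: cyclic_generators_def)
    have "ord x = p ^ a"
      using that assms mem_cyclic_generators_iff[OF assms(1,3)] by simp
    then show "p_part p (ord x) = p ^ a"
      using assms(2) by (simp add: p_part_def prime_imp_prime_elem)
  qed
  then show "conj_class G ` cyclic_generators z
      \<subseteq> {conj_class G g | g. g \<in> carrier G \<and> p_part p (ord g) = p ^ a}"
    by blast
qed

end

theorem theorem1p1:
  fixes G :: "('a, 'b) monoid_scheme" and p a :: nat and P :: "'a set"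
  assumes "Factorial_Ring.prime p"
    and "group G"
    and "finite (carrier G)"
    and "p dvd order G"
    and "is_sylow G p P"
    and "real a \<le> log (real p) (real (set_exponent G (subgroup_center G P)))"
  shows "real (kG G p a) \<ge> real p powr (real a - 1)"
proof -
  interpret group G by fact
  have p: "1 < p" using assms(1) prime_gt_1_nat by blast
  have P: "subgroup P G" "card P = p ^ multiplicity p (order G)"
    using assms(5) by (auto simp: is_sylow_def)
  have "subgroup_center G P \<subseteq> carrier G"
    using P(1) subgroup.subset by (fastforce simp: subgroup_center_def)
  then have "p ^ a \<le> set_exponent G (subgroup_center G P)"
    using pow_le_of_le_log[OF p set_exponent_pos] assms(3,6) by blast
  then obtain z where z: "z \<in> subgroup_center G P" "ord z = p ^ a"
    using exists_elem_of_ord_in_subgroup_center[OF assms(3,1) P] by blast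
  then have zc: "z \<in> carrier G" "P \<subseteq> centralizer z"
    using mem_subgroup_center_iff[OF subgroup.subset[OF P(1)]] subgroup.subset[OF P(1)] by auto
  let ?classes = "conj_class G ` cyclic_generators z"
  have "p ^ (a - 1) dvd card ?classes"
    using prime_power_dvd_card_conj_classes_cyclic_generators[OF assms(3,1) zc(1) z(2) P zc(2)] .
  moreover have "finite ?classes" "?classes \<noteq> {}"
    using assms(3) zc(1) finite_subset by (auto simp: cyclic_generators_def)
  ultimately have "p ^ (a - 1) \<le> card ?classes"
    by (simp add: dvd_imp_le card_gt_0_iff)
  also have "\<dots> \<le> kG G p a"
    using card_conj_classes_cyclic_generators_le_kG[OF assms(3,1) zc(1) z(2)] .
  finally show ?thesis
    using powr_pred_le_of_pow_pred_le[OF p] by blast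
qed

end
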